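(* In the retraining process below, with $\beta=\alpha\big((1+\tfrac1N)\alpha-\tfrac1N\big)$, for every $r\ge0$, $$S^{(r+1)}=\frac{\frac1N(1+2\alpha)+(1-\frac1N)(1+\alpha)S^{(0)}}{1+(1+\frac1N)\alpha}-\frac1N\Big(1-\frac1N\Big)\frac{(1-S^{(0)})\,\alpha\,\beta^{r}}{1+(1+\frac1N)\alpha},$$ and moreover, for each $k\in[s]$, $\nu_k^{(r)}:=\mathbb E[(p^{(r)}_k)^2]$ satisfies $$\nu_k^{(r+1)}=\frac{p^{(0)}_k}{N}\cdot\frac{1+2\alpha-(1-\frac1N)\alpha\beta^{r}}{1+(1+\frac1N)\alpha}+\Big(1-\frac1N\Big)(p^{(0)}_k)^2\cdot\frac{1+\alpha+\frac{\alpha}{N}\beta^{r}}{1+(1+\frac1N)\alpha}.$$ If $N>1$ and $\hat N>1$ then $\beta\in(0,1)$.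
   Context: Fix integers $s\ge2$, $N\ge1$, $\hat N\ge1$, let $\alpha=\hat N/(N+\hat N)$, and let $\mathbf p^{(0)}\in\Delta_s$ (probability simplex) with $S^{(0)}:=\|\mathbf p^{(0)}\|_2^2=\sum_k(p^{(0)}_k)^2$. Let $\mathbf e_1,\dots,\mathbf e_s$ be the standard basis of $\mathbb{R}^s$. Draw organic tokens $\mathbf z^{(0)}_1,\dots,\mathbf z^{(0)}_N$ i.i.d. with $\Pr(\mathbf z^{(0)}_n=\mathbf e_k)=p^{(0)}_k$; this same organic sample is used in every round. Set $\mathbf p^{(1)}=\frac1N\sum_{n=1}^N\mathbf z^{(0)}_n$. For $r\ge2$, conditionally on everything generated so far draw $\mathbf z^{(r-1)}_1,\dots,\mathbf z^{(r-1)}_{\hat N}$ i.i.d. with $\Pr(\mathbf z^{(r-1)}_n=\mathbf e_k)=p^{(r-1)}_k$, and set $\mathbf p^{(r)}=\frac{1}{N+\hat N}\big(\sum_{n=1}^N\mathbf z^{(0)}_n+\sum_{n=1}^{\hat N}\mathbf z^{(r-1)}_n\big)$. Let $S^{(r)}=\mathbb E[\|\mathbf p^{(r)}\|_2^2]$ for $r\ge1$. *)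

theory Defs
  imports "HOL-Probability.Probability"
begin

text \<open>Tokens are the elements of a finite type 'k (standing for the standard basis
  vectors e_1..e_s, s = CARD('k)); a probability vector is a function 'k => real.\<close>

definition token_pmf :: "('k::finite \<Rightarrow> real) \<Rightarrow> 'k pmf" where
  "token_pmf p = embed_pmf p"

definition cnt :: "'k list \<Rightarrow> 'k \<Rightarrow> real" where
  "cnt xs k = real (length (filter (\<lambda>x. x = k) xs))"

text \<open>Distribution of p^(r) (r >= 1) conditionally on the fixed organic sample zs.\<close>
fun cond_proc :: "nat \<Rightarrow> nat \<Rightarrow> 'k::finite list \<Rightarrow> nat \<Rightarrow> ('k \<Rightarrow> real) pmf" where
  "cond_proc N Nh zs 0 = return_pmf (\<lambda>k. 0)"
| "cond_proc N Nh zs (Suc 0) = return_pmf (\<lambda>k. cnt zs k / real N)"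
| "cond_proc N Nh zs (Suc (Suc r)) =
     bind_pmf (cond_proc N Nh zs (Suc r)) (\<lambda>q.
       bind_pmf (replicate_pmf Nh (token_pmf q)) (\<lambda>ys.
         return_pmf (\<lambda>k. (cnt zs k + cnt ys k) / (real N + real Nh))))"

text \<open>Law of p^(r) for r >= 1 (organic sample drawn once, i.i.d. from p0).\<close>
definition proc :: "nat \<Rightarrow> nat \<Rightarrow> ('k::finite \<Rightarrow> real) \<Rightarrow> nat \<Rightarrow> ('k \<Rightarrow> real) pmf" where
  "proc N Nh p0 r = bind_pmf (replicate_pmf N (token_pmf p0)) (\<lambda>zs. cond_proc N Nh zs r)"

definition S_r :: "nat \<Rightarrow> nat \<Rightarrow> ('k::finite \<Rightarrow> real) \<Rightarrow> nat \<Rightarrow> real" where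
  "S_r N Nh p0 r = measure_pmf.expectation (proc N Nh p0 r) (\<lambda>p. \<Sum>k\<in>UNIV. (p k)^2)"

definition nu_r :: "nat \<Rightarrow> nat \<Rightarrow> ('k::finite \<Rightarrow> real) \<Rightarrow> nat \<Rightarrow> 'k \<Rightarrow> real" where
  "nu_r N Nh p0 r k = measure_pmf.expectation (proc N Nh p0 r) (\<lambda>p. (p k)^2)"

end

theory Submission
  imports Defs
begin

(* Fix the organic sample and write a = cnt zs k / N. Every retraining round mixes the organic
   frequencies (weight 1 - \<alpha>) with the frequencies of Nh fresh draws from the current model
   (weight \<alpha>). Since the draws are unbiased, the conditional mean of p_k stays a, while the
   binomial variance of the draws makes the conditional second moment m_r satisfy the affine
   recursion m_(r+1) = (1 - \<beta>) v + \<beta> m_r with \<beta> = Nh (Nh - 1) / (N + Nh)^2 and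
   v = ((1 + \<alpha>) a^2 + \<alpha> a / N) / (1 + (1 + 1/N) \<alpha>); hence m_r = v + \<beta>^r (a^2 - v).
   Averaging over the organic sample, where E a = p_k and E a^2 = p_k / N + (1 - 1/N) p_k^2,
   yields \<nu>_k, and summing over k yields S. *)

lemma expectation_bind_pmf_cong:
  fixes f :: "'b \<Rightarrow> real"
  assumes fin: "finite (set_pmf M)"
    and fin_K: "\<And>x. x \<in> set_pmf M \<Longrightarrow> finite (set_pmf (K x))"
    and eq: "\<And>x. x \<in> set_pmf M \<Longrightarrow> measure_pmf.expectation (K x) f = g x"
  shows "measure_pmf.expectation (M \<bind> K) f = measure_pmf.expectation M g"
proof -
  have "measure_pmf.expectation (M \<bind> K) f = (\<Sum>x\<in>set_pmf M. pmf M x * g x)"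
    by (subst pmf_expectation_bind[OF fin fin_K]) (simp_all add: eq)
  also have "\<dots> = measure_pmf.expectation M g"
    by (subst integral_measure_pmf_real[OF fin]) (auto simp: mult.commute)
  finally show ?thesis .
qed

lemma finite_set_pmf_replicate_pmf [simp]:
  "finite (set_pmf p) \<Longrightarrow> finite (set_pmf (replicate_pmf n p))"
  by (simp add: set_replicate_pmf finite_lists_length_eq lists_eq_set)

lemma cnt_Nil [simp]: "cnt [] k = 0"
  by (simp add: cnt_def)

lemma cnt_Cons: "cnt (x # xs) k = of_bool (x = k) + cnt xs k"
  by (simp add: cnt_def)

lemma cnt_append: "cnt (xs @ ys) k = cnt xs k + cnt ys k"
  by (simp add: cnt_def)

lemma sum_cnt: "(\<Sum>k\<in>UNIV. cnt xs (k :: 'k::finite)) = real (length xs)"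
  by (induction xs) (simp_all add: cnt_Cons sum.distrib of_bool_def)

lemma expectation_replicate_pmf_Suc:
  fixes f :: "'a list \<Rightarrow> real"
  assumes "finite (set_pmf p)"
  shows "measure_pmf.expectation (replicate_pmf (Suc n) p) f
       = measure_pmf.expectation p (\<lambda>x. measure_pmf.expectation (replicate_pmf n p) (\<lambda>xs. f (x # xs)))"
  unfolding replicate_pmf.simps
  by (rule expectation_bind_pmf_cong) (simp_all add: assms map_pmf_def[symmetric])

lemma expectation_of_bool_eq_pmf: "measure_pmf.expectation p (\<lambda>x. of_bool (x = k)) = pmf p k"
  by (subst integral_measure_pmf_real[where A = "{k}"]) auto

lemma expectation_cnt_replicate_pmf:
  assumes "finite (set_pmf p)"
  shows "measure_pmf.expectation (replicate_pmf n p) (\<lambda>xs. cnt xs k) = real n * pmf p k"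
proof (induction n)
  case (Suc n)
  have "measure_pmf.expectation (replicate_pmf (Suc n) p) (\<lambda>xs. cnt xs k)
      = measure_pmf.expectation p (\<lambda>x. of_bool (x = k) + real n * pmf p k)"
    using assms Suc.IH
    by (simp only: expectation_replicate_pmf_Suc[OF assms])
      (simp add: cnt_Cons integrable_measure_pmf_finite)
  also have "\<dots> = real (Suc n) * pmf p k"
    using assms by (simp add: integrable_measure_pmf_finite expectation_of_bool_eq_pmf algebra_simps)
  finally show ?case .
qed simp

lemma expectation_cnt_sq_replicate_pmf:
  assumes "finite (set_pmf p)"
  shows "measure_pmf.expectation (replicate_pmf n p) (\<lambda>xs. (cnt xs k)^2)
       = real n * pmf p k + real n * (real n - 1) * (pmf p k)^2"
proof (induction n)
  case (Suc n)
  have sq: "(cnt (x # xs) k)^2 = of_bool (x = k) * (1 + 2 * cnt xs k) + (cnt xs k)^2" for x xs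
    by (simp add: cnt_Cons power2_eq_square algebra_simps)
  have "measure_pmf.expectation (replicate_pmf (Suc n) p) (\<lambda>xs. (cnt xs k)^2)
      = measure_pmf.expectation p (\<lambda>x. of_bool (x = k) * (1 + 2 * real n * pmf p k)
          + (real n * pmf p k + real n * (real n - 1) * (pmf p k)^2))"
    using assms Suc.IH
    by (simp only: expectation_replicate_pmf_Suc[OF assms])
      (simp add: sq integrable_measure_pmf_finite
        expectation_cnt_replicate_pmf)
  also have "\<dots> = real (Suc n) * pmf p k + real (Suc n) * (real (Suc n) - 1) * (pmf p k)^2"
    using assms by (simp add: integrable_measure_pmf_finite expectation_of_bool_eq_pmf algebra_simps power2_eq_square)
  finally show ?case .
qed simp

definition prob_vector :: "('k::finite \<Rightarrow> real) \<Rightarrow> bool" where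
  "prob_vector q \<longleftrightarrow> (\<forall>k. 0 \<le> q k) \<and> (\<Sum>k\<in>UNIV. q k) = 1"

lemma pmf_token_pmf:
  assumes "prob_vector q"
  shows "pmf (token_pmf q) k = q k"
proof -
  have nonneg: "\<And>k. 0 \<le> q k" and sum: "(\<Sum>k\<in>UNIV. q k) = 1"
    using assms by (auto simp: prob_vector_def)
  have "(\<integral>\<^sup>+k. ennreal (q k) \<partial>count_space UNIV) = 1"
    by (simp add: nn_integral_count_space_finite nonneg sum)
  then show ?thesis
    unfolding token_pmf_def by (rule pmf_embed_pmf[OF nonneg])
qed

lemma prob_vector_frequencies:
  assumes "xs \<noteq> []"
  shows "prob_vector (\<lambda>k. cnt xs k / real (length xs))"
  using assms by (simp add: prob_vector_def cnt_def sum_divide_distrib[symmetric] sum_cnt[unfolded cnt_def])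

lemma finite_set_pmf_cond_proc [simp]: "finite (set_pmf (cond_proc N Nh zs r))"
  by (induction N Nh zs r rule: cond_proc.induct) auto

lemma finite_set_pmf_proc [simp]: "finite (set_pmf (proc N Nh p0 r))"
  by (simp add: proc_def)

lemma prob_vector_cond_proc:
  assumes "length zs = N" and "N \<ge> 1" and "q \<in> set_pmf (cond_proc N Nh zs (Suc r))"
  shows "prob_vector q"
proof -
  have "zs \<noteq> []"
    using assms(1,2) by auto
  show ?thesis
  proof (cases r)
    case 0
    with assms \<open>zs \<noteq> []\<close> show ?thesis
      using prob_vector_frequencies[of zs] by auto
  next
    case (Suc r')
    with assms obtain ys where "length ys = Nh"
      and "q = (\<lambda>k. cnt (zs @ ys) k / real (length (zs @ ys)))"
      by (auto simp: set_replicate_pmf cnt_append)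
    with \<open>zs \<noteq> []\<close> show ?thesis
      using prob_vector_frequencies[of "zs @ ys"] by auto
  qed
qed

definition retrain_step :: "nat \<Rightarrow> nat \<Rightarrow> 'k::finite list \<Rightarrow> ('k \<Rightarrow> real) \<Rightarrow> ('k \<Rightarrow> real) pmf" where
  "retrain_step N Nh zs q =
     map_pmf (\<lambda>ys k. (cnt zs k + cnt ys k) / (real N + real Nh)) (replicate_pmf Nh (token_pmf q))"

lemma cond_proc_Suc_Suc:
  "cond_proc N Nh zs (Suc (Suc r)) = cond_proc N Nh zs (Suc r) \<bind> retrain_step N Nh zs"
  unfolding retrain_step_def[abs_def] map_pmf_def by simp

lemma finite_set_pmf_retrain_step [simp]: "finite (set_pmf (retrain_step N Nh zs q))"
  by (simp add: retrain_step_def)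

lemma expectation_retrain_step:
  assumes "prob_vector q"
  shows "measure_pmf.expectation (retrain_step N Nh zs q) (\<lambda>p. p k)
           = (cnt zs k + real Nh * q k) / (real N + real Nh)"
    and "measure_pmf.expectation (retrain_step N Nh zs q) (\<lambda>p. (p k)^2)
           = ((cnt zs k)^2 + (2 * cnt zs k + 1) * real Nh * q k + real Nh * (real Nh - 1) * (q k)^2)
             / (real N + real Nh)^2"
proof -
  let ?Y = "replicate_pmf Nh (token_pmf q)"
  have EY: "measure_pmf.expectation ?Y (\<lambda>ys. cnt ys k) = real Nh * q k"
    using expectation_cnt_replicate_pmf[of "token_pmf q" Nh k] by (simp add: pmf_token_pmf[OF assms])
  have EY2: "measure_pmf.expectation ?Y (\<lambda>ys. (cnt ys k)^2)
      = real Nh * q k + real Nh * (real Nh - 1) * (q k)^2"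
    using expectation_cnt_sq_replicate_pmf[of "token_pmf q" Nh k] by (simp add: pmf_token_pmf[OF assms])
  show "measure_pmf.expectation (retrain_step N Nh zs q) (\<lambda>p. p k)
           = (cnt zs k + real Nh * q k) / (real N + real Nh)"
    by (simp add: retrain_step_def integrable_measure_pmf_finite EY)
  have "measure_pmf.expectation (retrain_step N Nh zs q) (\<lambda>p. (p k)^2)
      = measure_pmf.expectation ?Y (\<lambda>ys. (cnt zs k)^2 + (cnt ys k)^2 + 2 * cnt zs k * cnt ys k)
        / (real N + real Nh)^2"
    by (simp add: retrain_step_def power_divide power2_sum)
  then show "measure_pmf.expectation (retrain_step N Nh zs q) (\<lambda>p. (p k)^2)
           = ((cnt zs k)^2 + (2 * cnt zs k + 1) * real Nh * q k + real Nh * (real Nh - 1) * (q k)^2)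
             / (real N + real Nh)^2"
    by (simp add: integrable_measure_pmf_finite EY EY2 algebra_simps)
qed

lemma expectation_cond_proc:
  assumes "length zs = N" and "N \<ge> 1"
  shows "measure_pmf.expectation (cond_proc N Nh zs (Suc r)) (\<lambda>p. p k) = cnt zs k / real N"
proof (induction r)
  case (Suc r)
  have "measure_pmf.expectation (cond_proc N Nh zs (Suc (Suc r))) (\<lambda>p. p k)
      = measure_pmf.expectation (cond_proc N Nh zs (Suc r))
          (\<lambda>q. (cnt zs k + real Nh * q k) / (real N + real Nh))"
    unfolding cond_proc_Suc_Suc
    by (rule expectation_bind_pmf_cong)
      (simp_all add: expectation_retrain_step prob_vector_cond_proc[OF assms])
  also have "\<dots> = (cnt zs k / real N) * (real N + real Nh) / (real N + real Nh)"
    using assms by (simp add: integrable_measure_pmf_finite Suc.IH field_simps)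
  also have "\<dots> = cnt zs k / real N"
    using assms by simp
  finally show ?case .
qed simp

definition synthetic_share :: "nat \<Rightarrow> nat \<Rightarrow> real" where
  "synthetic_share N Nh = real Nh / (real N + real Nh)"

definition decay_rate :: "nat \<Rightarrow> nat \<Rightarrow> real" where
  "decay_rate N Nh = synthetic_share N Nh * ((1 + 1 / real N) * synthetic_share N Nh - 1 / real N)"

lemma synthetic_share_nonneg: "synthetic_share N Nh \<ge> 0"
  by (simp add: synthetic_share_def)

lemma decay_rate_eq:
  assumes "N \<ge> 1"
  shows "decay_rate N Nh = real Nh * (real Nh - 1) / (real N + real Nh)^2"
proof -
  have "(1 + 1 / real N) * synthetic_share N Nh - 1 / real N = (real Nh - 1) / (real N + real Nh)"
    using assms unfolding synthetic_share_def by (simp add: divide_simps) (simp add: algebra_simps)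
  then show ?thesis
    unfolding decay_rate_def by (simp add: synthetic_share_def power2_eq_square)
qed

lemma decay_rate_bounds:
  assumes "N > 1" and "Nh > 1"
  shows "0 < decay_rate N Nh" and "decay_rate N Nh < 1"
proof -
  have "real Nh * (real Nh - 1) < (real Nh)^2"
    using assms(2) by (simp add: power2_eq_square)
  also have "\<dots> \<le> (real N + real Nh)^2"
    by (simp add: power_mono)
  finally have "real Nh * (real Nh - 1) < (real N + real Nh)^2" .
  with assms show "0 < decay_rate N Nh" and "decay_rate N Nh < 1"
    by (simp_all add: decay_rate_eq)
qed

lemma affine_recurrence_closed_form:
  fixes m :: "nat \<Rightarrow> 'a::comm_ring_1"
  assumes "\<And>r. m (Suc r) = (1 - \<beta>) * v + \<beta> * m r"
  shows "m r = v + \<beta> ^ r * (m 0 - v)"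
proof (induction r)
  case (Suc r)
  show ?case
    unfolding assms Suc.IH by (simp add: algebra_simps)
qed simp

lemma retrain_second_moment_recurrence:
  fixes N Nh :: nat and a m :: real
  assumes "N \<ge> 1"
  defines "\<alpha> \<equiv> synthetic_share N Nh" and "\<beta> \<equiv> decay_rate N Nh"
  defines "v \<equiv> ((1 + \<alpha>) * a^2 + \<alpha> * a / real N) / (1 + (1 + 1 / real N) * \<alpha>)"
  shows "((real N * a)^2 + (2 * real N * a + 1) * real Nh * a + real Nh * (real Nh - 1) * m)
           / (real N + real Nh)^2 = (1 - \<beta>) * v + \<beta> * m"
proof -
  define n h where "n = real N" and "h = real Nh"
  define D where "D = n^2 + 2 * n * h + h"
  have n: "n > 0" and nh: "n + h > 0"
    using assms(1) by (simp_all add: n_def h_def)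
  have D: "D > 0"
    using n unfolding D_def h_def by (simp add: add_pos_nonneg)
  have \<beta>: "\<beta> = h * (h - 1) / (n + h)^2"
    using assms(1) by (simp add: \<beta>_def decay_rate_eq n_def h_def)
  have "1 - \<beta> = D / (n + h)^2"
    using nh unfolding \<beta> D_def by (simp add: divide_simps) (simp add: algebra_simps power2_eq_square)
  moreover have "v = (n * (n + 2 * h) * a^2 + h * a) / D"
    using nh n D unfolding v_def \<alpha>_def synthetic_share_def D_def n_def h_def
    by (simp add: divide_simps) (simp add: algebra_simps power2_eq_square)
  ultimately have "(1 - \<beta>) * v = (n * (n + 2 * h) * a^2 + h * a) / (n + h)^2"
    using D by simp
  also have "n * (n + 2 * h) * a^2 + h * a = (n * a)^2 + (2 * n * a + 1) * h * a"
    by (simp add: algebra_simps power2_eq_square)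
  finally show ?thesis
    unfolding \<beta> n_def h_def by (simp add: add_divide_distrib)
qed

lemma expectation_sq_cond_proc:
  fixes zs :: "'k::finite list" and k :: 'k and N Nh :: nat
  assumes "length zs = N" and "N \<ge> 1"
  defines "a \<equiv> cnt zs k / real N"
    and "\<alpha> \<equiv> synthetic_share N Nh" and "\<beta> \<equiv> decay_rate N Nh"
  defines "v \<equiv> ((1 + \<alpha>) * a^2 + \<alpha> * a / real N) / (1 + (1 + 1 / real N) * \<alpha>)"
  shows "measure_pmf.expectation (cond_proc N Nh zs (Suc r)) (\<lambda>p. (p k)^2) = v + \<beta> ^ r * (a^2 - v)"
proof -
  let ?m = "\<lambda>r. measure_pmf.expectation (cond_proc N Nh zs (Suc r)) (\<lambda>p. (p k)^2)"
  have n: "real N > 0"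
    using assms(2) by simp
  have "?m (Suc r) = (1 - \<beta>) * v + \<beta> * ?m r" for r
  proof -
    have "?m (Suc r) = measure_pmf.expectation (cond_proc N Nh zs (Suc r))
          (\<lambda>q. ((cnt zs k)^2 + (2 * cnt zs k + 1) * real Nh * q k + real Nh * (real Nh - 1) * (q k)^2)
             / (real N + real Nh)^2)"
      unfolding cond_proc_Suc_Suc
      by (rule expectation_bind_pmf_cong)
        (simp_all add: expectation_retrain_step prob_vector_cond_proc[OF assms(1,2)])
    also have "\<dots> = ((real N * a)^2 + (2 * real N * a + 1) * real Nh * a + real Nh * (real Nh - 1) * ?m r)
             / (real N + real Nh)^2"
      using n by (simp add: integrable_measure_pmf_finite expectation_cond_proc[OF assms(1,2)] a_def)
    also have "\<dots> = (1 - \<beta>) * v + \<beta> * ?m r"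
      unfolding v_def \<alpha>_def \<beta>_def by (rule retrain_second_moment_recurrence[OF assms(2)])
    finally show ?thesis .
  qed
  then have "?m r = v + \<beta> ^ r * (?m 0 - v)"
    by (rule affine_recurrence_closed_form)
  then show ?thesis
    using n by (simp add: a_def power_divide)
qed

lemma nu_r_Suc:
  fixes p0 :: "'k::finite \<Rightarrow> real" and k :: 'k and N Nh :: nat
  assumes "N \<ge> 1" and "prob_vector p0"
  defines "\<alpha> \<equiv> synthetic_share N Nh" and "\<beta> \<equiv> decay_rate N Nh"
  shows "nu_r N Nh p0 (Suc r) k =
           (p0 k / real N) * ((1 + 2 * \<alpha> - (1 - 1 / real N) * \<alpha> * \<beta> ^ r)
             / (1 + (1 + 1 / real N) * \<alpha>))
           + (1 - 1 / real N) * (p0 k)^2 * ((1 + \<alpha> + (\<alpha> / real N) * \<beta> ^ r)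
             / (1 + (1 + 1 / real N) * \<alpha>))"
proof -
  let ?Z = "replicate_pmf N (token_pmf p0)"
  define n where "n = real N"
  define v where "v a = ((1 + \<alpha>) * a^2 + \<alpha> * a / n) / (1 + (1 + 1 / n) * \<alpha>)" for a
  have n: "n > 0"
    using assms(1) by (simp add: n_def)
  have "nu_r N Nh p0 (Suc r) k
      = measure_pmf.expectation ?Z (\<lambda>zs. v (cnt zs k / n) + \<beta> ^ r * ((cnt zs k / n)^2 - v (cnt zs k / n)))"
    unfolding nu_r_def proc_def
  proof (rule expectation_bind_pmf_cong)
    fix zs assume "zs \<in> set_pmf ?Z"
    then have "length zs = N"
      by (simp add: set_replicate_pmf)
    from expectation_sq_cond_proc[OF this assms(1), where k = k and Nh = Nh and r = r]
    show "measure_pmf.expectation (cond_proc N Nh zs (Suc r)) (\<lambda>p. (p k)^2)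
        = v (cnt zs k / n) + \<beta> ^ r * ((cnt zs k / n)^2 - v (cnt zs k / n))"
      unfolding v_def n_def \<alpha>_def \<beta>_def .
  qed simp_all
  also have "\<dots> = (p0 k / n) * ((1 + 2 * \<alpha> - (1 - 1 / n) * \<alpha> * \<beta> ^ r) / (1 + (1 + 1 / n) * \<alpha>))
           + (1 - 1 / n) * (p0 k)^2 * ((1 + \<alpha> + (\<alpha> / n) * \<beta> ^ r) / (1 + (1 + 1 / n) * \<alpha>))"
  proof -
    have "measure_pmf.expectation ?Z (\<lambda>zs. cnt zs k) = n * p0 k"
      using expectation_cnt_replicate_pmf[of "token_pmf p0" N k]
      by (simp add: pmf_token_pmf[OF assms(2)] n_def)
    moreover have "measure_pmf.expectation ?Z (\<lambda>zs. (cnt zs k)^2) = n * p0 k + n * (n - 1) * (p0 k)^2"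
      using expectation_cnt_sq_replicate_pmf[of "token_pmf p0" N k]
      by (simp add: pmf_token_pmf[OF assms(2)] n_def)
    \<comment> \<open>n times the denominator, in the normal form in which divide_simps needs it\<close>
    moreover have "\<alpha> + (n + \<alpha> * n) \<noteq> 0"
      using n synthetic_share_nonneg[of N Nh] unfolding \<alpha>_def
      by (metis add_nonneg_pos add_pos_nonneg less_irrefl mult_nonneg_nonneg less_imp_le)
    ultimately show ?thesis
      using n unfolding v_def
      by (simp add: integrable_measure_pmf_finite divide_simps) (simp add: algebra_simps power2_eq_square)
  qed
  finally show ?thesis
    unfolding n_def .
qed

lemma S_r_eq_sum_nu_r: "S_r N Nh p0 r = (\<Sum>k\<in>UNIV. nu_r N Nh p0 r k)"
  unfolding S_r_def nu_r_def
  by (rule Bochner_Integration.integral_sum) (simp add: integrable_measure_pmf_finite)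

lemma S_r_Suc:
  fixes p0 :: "'k::finite \<Rightarrow> real" and N Nh :: nat
  assumes "N \<ge> 1" and "prob_vector p0"
  defines "\<alpha> \<equiv> synthetic_share N Nh" and "\<beta> \<equiv> decay_rate N Nh"
    and "S0 \<equiv> (\<Sum>k\<in>UNIV. (p0 k)^2)"
  shows "S_r N Nh p0 (Suc r) =
           ((1 / real N) * (1 + 2 * \<alpha>) + (1 - 1 / real N) * (1 + \<alpha>) * S0)
             / (1 + (1 + 1 / real N) * \<alpha>)
           - (1 / real N) * (1 - 1 / real N) * ((1 - S0) * \<alpha> * \<beta> ^ r)
             / (1 + (1 + 1 / real N) * \<alpha>)"
proof -
  define n where "n = real N"
  define D where "D = 1 + (1 + 1 / n) * \<alpha>"
  have n: "n > 0"
    using assms(1) by (simp add: n_def)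
  have D: "D > 0"
    unfolding D_def using n by (simp add: add_pos_nonneg \<alpha>_def synthetic_share_nonneg)
  have "S_r N Nh p0 (Suc r) = (\<Sum>k\<in>UNIV. (p0 k / n) * ((1 + 2 * \<alpha> - (1 - 1 / n) * \<alpha> * \<beta> ^ r) / D)
           + (1 - 1 / n) * (p0 k)^2 * ((1 + \<alpha> + (\<alpha> / n) * \<beta> ^ r) / D))"
    unfolding S_r_eq_sum_nu_r nu_r_Suc[OF assms(1,2)] n_def D_def \<alpha>_def \<beta>_def ..
  also have "\<dots> = (\<Sum>k\<in>UNIV. p0 k) / n * ((1 + 2 * \<alpha> - (1 - 1 / n) * \<alpha> * \<beta> ^ r) / D)
           + (1 - 1 / n) * S0 * ((1 + \<alpha> + (\<alpha> / n) * \<beta> ^ r) / D)"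
    unfolding S0_def by (simp add: sum.distrib sum_distrib_left sum_distrib_right sum_divide_distrib)
  also have "\<dots> = ((1 / n) * (1 + 2 * \<alpha>) + (1 - 1 / n) * (1 + \<alpha>) * S0) / D
           - (1 / n) * (1 - 1 / n) * ((1 - S0) * \<alpha> * \<beta> ^ r) / D"
    using assms(2) n D by (simp add: prob_vector_def field_simps)
  finally show ?thesis
    unfolding n_def D_def .
qed

theorem mainTheorem8:
  fixes p0 :: "'k::finite \<Rightarrow> real" and N Nh :: nat
  assumes "CARD('k) \<ge> 2" and "N \<ge> 1" and "Nh \<ge> 1"
    and "\<And>k. p0 k \<ge> 0" and "(\<Sum>k\<in>UNIV. p0 k) = 1"
  defines "\<alpha> \<equiv> real Nh / (real N + real Nh)"
  defines "\<beta> \<equiv> \<alpha> * ((1 + 1 / real N) * \<alpha> - 1 / real N)"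
  defines "S0 \<equiv> (\<Sum>k\<in>UNIV. (p0 k)^2)"
  shows "(\<forall>r. S_r N Nh p0 (r + 1) =
            ((1 / real N) * (1 + 2 * \<alpha>) + (1 - 1 / real N) * (1 + \<alpha>) * S0)
              / (1 + (1 + 1 / real N) * \<alpha>)
            - (1 / real N) * (1 - 1 / real N) * ((1 - S0) * \<alpha> * \<beta> ^ r)
              / (1 + (1 + 1 / real N) * \<alpha>))
       \<and> (\<forall>r k. nu_r N Nh p0 (r + 1) k =
            (p0 k / real N) * ((1 + 2 * \<alpha> - (1 - 1 / real N) * \<alpha> * \<beta> ^ r)
              / (1 + (1 + 1 / real N) * \<alpha>))
            + (1 - 1 / real N) * (p0 k)^2 * ((1 + \<alpha> + (\<alpha> / real N) * \<beta> ^ r)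
              / (1 + (1 + 1 / real N) * \<alpha>)))
       \<and> (N > 1 \<and> Nh > 1 \<longrightarrow> 0 < \<beta> \<and> \<beta> < 1)"
proof -
  have p0: "prob_vector p0"
    using assms(4,5) by (simp add: prob_vector_def)
  have \<alpha>: "\<alpha> = synthetic_share N Nh"
    by (simp add: \<alpha>_def synthetic_share_def)
  have \<beta>: "\<beta> = decay_rate N Nh"
    by (simp add: \<beta>_def \<alpha> decay_rate_def)
  show ?thesis
    unfolding \<alpha> \<beta> S0_def Suc_eq_plus1[symmetric]
    using S_r_Suc[OF assms(2) p0] nu_r_Suc[OF assms(2) p0] decay_rate_bounds
    by simp
qed

end
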